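(* Under Assumption 1 and the FP-UCB algorithm, for every arm $i\in A\setminus C(\theta^o)$ with $i\ne a^*(\theta^o)$, there is a constant $C_i$, depending only on $|A|$ and on the means $(\mu_j(\theta))_{j\in[L],\theta\in\Theta}$ and not on $T$, such that $\mathbb{E}[n_i(T)]\le C_i$ for all $T$.
   Context: Setting: there are $L$ arms $[L]=\{1,\dots,L\}$ and a known finite parameter set $\Theta$. For each $\theta\in\Theta$ and arm $i$, $P_i(\cdot;\theta)$ is a known probability distribution supported on $[0,1]$ with known mean $\mu_i(\theta)$. An unknown true parameter $\theta^o\in\Theta$ governs the rewards: the reward $X_i(\tau)$ from the $\tau$-th pull of arm $i$ is drawn from $P_i(\cdot;\theta^o)$; rewards of a given arm are i.i.d. and independent across arms. At each time $t=1,\dots,T$ the agent picks an arm $a(t)$ based on past observations. Let $a^*(\theta)=\arg\max_{i\in[L]}\mu_i(\theta)$. Assumption 1: for every $\theta\in\Theta$ the maximizer $a^*(\theta)$ is unique. Logarithms are natural. Notation: $n_i(t)=\sum_{\tau=1}^t \mathbb{1}\{a(\tau)=i\}$; $\hat\mu_i(t)=\frac{1}{n_i(t)}\sum_{\tau=1}^{n_i(t)}X_i(\tau)$; $A=\{a^*(\theta):\theta\in\Theta\}$; $B(\theta^o)=\{\theta\in\Theta: a^*(\theta)\ne a^*(\theta^o)\text{ and } \mu_{a^*(\theta^o)}(\theta^o)=\mu_{a^*(\theta^o)}(\theta)\}$; $C(\theta^o)=\{a^*(\theta):\theta\in B(\theta^o)\}$. FP-UCB algorithm: at times $t=1,\dots,|A|$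 select each arm of $A$ once. Then set episode counter $k=1$, $t=|A|+1$, and while $t\le T$: let $t_k=t-1$ and compute $A_k=\{a^*(\theta):\theta\in\Theta,\ \forall i\in A,\ |\hat\mu_i(t_k)-\mu_i(\theta)|\le\sqrt{3\log(k)/n_i(t_k)}\}$; if $A_k\ne\varnothing$, select each arm of $A_k$ once ($t\leftarrow t+|A_k|$), otherwise select each arm of $A$ once ($t\leftarrow t+|A|$); then $k\leftarrow k+1$. (Pulls beyond time $T$ are discarded.) *)

theory Defs
  imports "HOL-Probability.Probability"
begin

text \<open>Arms are the naturals 1..L; parameters have an arbitrary type 'p;
  mu j th is the (known) mean of arm j under parameter th.\<close>

definition arms :: "nat \<Rightarrow> nat set" where
  "arms L = {1..L}"

text \<open>The (unique under Assumption 1) best arm under parameter th.\<close>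
definition astar :: "nat \<Rightarrow> (nat \<Rightarrow> 'p \<Rightarrow> real) \<Rightarrow> 'p \<Rightarrow> nat" where
  "astar L mu th = (THE a. a \<in> arms L \<and> (\<forall>j\<in>arms L. j \<noteq> a \<longrightarrow> mu j th < mu a th))"

definition Aset :: "nat \<Rightarrow> 'p set \<Rightarrow> (nat \<Rightarrow> 'p \<Rightarrow> real) \<Rightarrow> nat set" where
  "Aset L Th mu = astar L mu ` Th"

definition Bset :: "nat \<Rightarrow> 'p set \<Rightarrow> (nat \<Rightarrow> 'p \<Rightarrow> real) \<Rightarrow> 'p \<Rightarrow> 'p set" where
  "Bset L Th mu tho = {th \<in> Th. astar L mu th \<noteq> astar L mu tho \<and>
        mu (astar L mu tho) tho = mu (astar L mu tho) th}"

definition Cset :: "nat \<Rightarrow> 'p set \<Rightarrow> (nat \<Rightarrow> 'p \<Rightarrow> real) \<Rightarrow> 'p \<Rightarrow> nat set" where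
  "Cset L Th mu tho = astar L mu ` Bset L Th mu tho"

text \<open>A reward realisation r j tau is the reward of the tau-th pull (tau >= 1) of arm j.
  A history is the list of arms pulled so far (in order).\<close>

definition npulls :: "nat list \<Rightarrow> nat \<Rightarrow> nat" where
  "npulls h j = count_list h j"

definition muhat :: "(nat \<Rightarrow> nat \<Rightarrow> real) \<Rightarrow> nat list \<Rightarrow> nat \<Rightarrow> real" where
  "muhat r h j = (\<Sum>tau = 1..npulls h j. r j tau) / real (npulls h j)"

definition episode_set :: "nat \<Rightarrow> 'p set \<Rightarrow> (nat \<Rightarrow> 'p \<Rightarrow> real) \<Rightarrow>
    (nat \<Rightarrow> nat \<Rightarrow> real) \<Rightarrow> nat list \<Rightarrow> nat \<Rightarrow> nat set" where
  "episode_set L Th mu r h k =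
     {astar L mu th | th. th \<in> Th \<and>
        (\<forall>j\<in>Aset L Th mu. \<bar>muhat r h j - mu j th\<bar> \<le> sqrt (3 * ln (real k) / real (npulls h j)))}"

primrec fp_hist :: "nat \<Rightarrow> 'p set \<Rightarrow> (nat \<Rightarrow> 'p \<Rightarrow> real) \<Rightarrow>
    (nat \<Rightarrow> nat \<Rightarrow> real) \<Rightarrow> nat \<Rightarrow> nat list" where
  "fp_hist L Th mu r 0 = sorted_list_of_set (Aset L Th mu)"
| "fp_hist L Th mu r (Suc k) =
     (let h = fp_hist L Th mu r k; S = episode_set L Th mu r h (Suc k)
      in h @ sorted_list_of_set (if S = {} then Aset L Th mu else S))"

text \<open>n_j(T): number of pulls of arm j among the first T pulls (pulls beyond T discarded).
  Every round has at least one pull, so fp_hist ... T has length > T.\<close>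
definition fp_count :: "nat \<Rightarrow> 'p set \<Rightarrow> (nat \<Rightarrow> 'p \<Rightarrow> real) \<Rightarrow>
    (nat \<Rightarrow> nat \<Rightarrow> real) \<Rightarrow> nat \<Rightarrow> nat \<Rightarrow> nat" where
  "fp_count L Th mu r T j = count_list (take T (fp_hist L Th mu r T)) j"

end

theory Submission
  imports Defs "HOL-Real_Asymp.Real_Asymp"
begin

text \<open>Call episode k good if every arm of A, at every sample size n \<le> k, has its empirical mean
  within sqrt (3 ln k / n) of its true mean; by Hoeffding's inequality and a union bound an
  episode is bad with probability at most 2 |A| / k^5. If all episodes between k/2 and k are
  good, the true parameter is consistent with the data in each of them, so the best arm a* is
  pulled at least k/2 times before episode k. Any parameter th with a*(th) = i that is still
  consistent in episode k then satisfies |mu_a*(th) - mu_a*(tho)| \<le> 2 sqrt (6 ln k / k). Since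
  i is not in C(tho), this gap is bounded below by some D > 0, so i can be pulled in a late
  episode k only if one of the episodes k/2..k is bad. The expected number of such pulls is
  bounded by a convergent series, uniformly in T.\<close>

lemma count_list_distinct: "distinct xs \<Longrightarrow> count_list xs x = (if x \<in> set xs then 1 else 0)"
  by (induction xs) auto

lemma count_list_take_le: "count_list (take n xs) x \<le> count_list xs x"
proof -
  have "count_list xs x = count_list (take n xs) x + count_list (drop n xs) x"
    by (metis append_take_drop_id count_list_append)
  then show ?thesis by simp
qed

lemma astar_eqI:
  assumes "a \<in> arms L" "\<forall>j\<in>arms L. j \<noteq> a \<longrightarrow> mu j th < mu a th"
  shows "astar L mu th = a"
  unfolding astar_def
proof (rule the_equality)
  fix b assume "b \<in> arms L \<and> (\<forall>j\<in>arms L. j \<noteq> b \<longrightarrow> mu j th < mu b th)"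
  then show "b = a" using assms by force
qed (use assms in blast)

lemma Aset_subset_arms:
  assumes "\<forall>th\<in>Th. \<exists>a\<in>arms L. \<forall>j\<in>arms L. j \<noteq> a \<longrightarrow> mu j th < mu a th"
  shows "Aset L Th mu \<subseteq> arms L"
proof
  fix x assume "x \<in> Aset L Th mu"
  then obtain th where th: "th \<in> Th" "x = astar L mu th" unfolding Aset_def by blast
  with assms obtain a where "a \<in> arms L" "\<forall>j\<in>arms L. j \<noteq> a \<longrightarrow> mu j th < mu a th" by blast
  then have "astar L mu th = a" by (rule astar_eqI)
  with th(2) \<open>a \<in> arms L\<close> show "x \<in> arms L" by simp
qed

definition fp_round :: "nat \<Rightarrow> 'p set \<Rightarrow> (nat \<Rightarrow> 'p \<Rightarrow> real) \<Rightarrow>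
    (nat \<Rightarrow> nat \<Rightarrow> real) \<Rightarrow> nat \<Rightarrow> nat set" where
  "fp_round L Th mu r k = (case k of 0 \<Rightarrow> Aset L Th mu | Suc m \<Rightarrow>
     (let S = episode_set L Th mu r (fp_hist L Th mu r m) (Suc m) in if S = {} then Aset L Th mu else S))"

lemma fp_hist_Suc:
  "fp_hist L Th mu r (Suc k) = fp_hist L Th mu r k @ sorted_list_of_set (fp_round L Th mu r (Suc k))"
  by (simp add: fp_round_def Let_def)

lemma fp_round_subset_Aset: "fp_round L Th mu r k \<subseteq> Aset L Th mu"
  unfolding fp_round_def episode_set_def Aset_def by (auto simp: Let_def split: nat.splits)

lemma npulls_fp_hist:
  assumes "finite Th"
  shows "npulls (fp_hist L Th mu r k) j = (\<Sum>m\<le>k. if j \<in> fp_round L Th mu r m then 1 else 0)"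
proof -
  have fin: "finite (fp_round L Th mu r m)" for m
    using fp_round_subset_Aset assms unfolding Aset_def by (metis finite_imageI finite_subset)
  show ?thesis
  proof (induction k)
    case 0
    then show ?case using fin[of 0] by (simp add: npulls_def count_list_distinct fp_round_def)
  next
    case (Suc k)
    then show ?case
      using fin[of "Suc k"] by (simp add: npulls_def fp_hist_Suc count_list_distinct del: fp_hist.simps)
  qed
qed

lemma npulls_fp_hist_bounds:
  assumes "finite Th" "j \<in> Aset L Th mu"
  shows "1 \<le> npulls (fp_hist L Th mu r k) j" "npulls (fp_hist L Th mu r k) j \<le> Suc k"
proof -
  let ?f = "\<lambda>m. if j \<in> fp_round L Th mu r m then 1 else 0 :: nat"
  have "?f 0 \<le> (\<Sum>m\<le>k. ?f m)" by (rule member_le_sum) auto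
  then show "1 \<le> npulls (fp_hist L Th mu r k) j"
    using assms by (simp add: npulls_fp_hist fp_round_def)
  have "(\<Sum>m\<le>k. ?f m) \<le> (\<Sum>m\<le>k. 1)" by (rule sum_mono) auto
  then show "npulls (fp_hist L Th mu r k) j \<le> Suc k"
    using assms by (simp add: npulls_fp_hist)
qed

text \<open>Quantifying over all sample sizes n \<le> k, rather than over the random pull counts, makes
  the bad event a finite union of fixed-sample Hoeffding events.\<close>
definition fp_deviation :: "nat \<Rightarrow> 'p set \<Rightarrow> (nat \<Rightarrow> 'p \<Rightarrow> real) \<Rightarrow> 'p \<Rightarrow>
    (nat \<Rightarrow> nat \<Rightarrow> real) \<Rightarrow> nat \<Rightarrow> bool" where
  "fp_deviation L Th mu tho r k \<longleftrightarrow> (\<exists>j\<in>Aset L Th mu. \<exists>n\<in>{1..k}.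
     sqrt (3 * ln (real k) / real n) < \<bar>(\<Sum>tau = 1..n. r j tau) / real n - mu j tho\<bar>)"

lemma muhat_close_if_no_deviation:
  assumes "finite Th" "\<not> fp_deviation L Th mu tho r (Suc m)" "j \<in> Aset L Th mu"
  shows "\<bar>muhat r (fp_hist L Th mu r m) j - mu j tho\<bar> \<le>
           sqrt (3 * ln (real (Suc m)) / real (npulls (fp_hist L Th mu r m) j))"
proof -
  have "npulls (fp_hist L Th mu r m) j \<in> {1..Suc m}"
    using npulls_fp_hist_bounds[OF assms(1,3)] by auto
  then show ?thesis using assms(2,3) unfolding fp_deviation_def muhat_def by (meson not_less)
qed

lemma fp_round_if_no_deviation:
  assumes "finite Th" "tho \<in> Th" "\<not> fp_deviation L Th mu tho r (Suc m)"
  shows "fp_round L Th mu r (Suc m) = episode_set L Th mu r (fp_hist L Th mu r m) (Suc m)"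
    and "astar L mu tho \<in> fp_round L Th mu r (Suc m)"
proof -
  have "astar L mu tho \<in> episode_set L Th mu r (fp_hist L Th mu r m) (Suc m)"
    unfolding episode_set_def using muhat_close_if_no_deviation[OF assms(1,3)] assms(2) by blast
  then show "fp_round L Th mu r (Suc m) = episode_set L Th mu r (fp_hist L Th mu r m) (Suc m)"
    and "astar L mu tho \<in> fp_round L Th mu r (Suc m)"
    by (auto simp: fp_round_def Let_def)
qed

lemma fp_round_consistent_gap:
  assumes "finite Th" "tho \<in> Th" "\<not> fp_deviation L Th mu tho r (Suc m)"
    and "i \<in> fp_round L Th mu r (Suc m)"
  obtains th where "th \<in> Th" "astar L mu th = i"
    "\<bar>mu (astar L mu tho) th - mu (astar L mu tho) tho\<bar>
       \<le> 2 * sqrt (3 * ln (real (Suc m)) / real (npulls (fp_hist L Th mu r m) (astar L mu tho)))"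
proof -
  let ?a = "astar L mu tho"
  let ?h = "fp_hist L Th mu r m"
  let ?s = "sqrt (3 * ln (real (Suc m)) / real (npulls ?h ?a))"
  have a: "?a \<in> Aset L Th mu" using assms(2) by (simp add: Aset_def)
  obtain th where th: "th \<in> Th" "astar L mu th = i"
    "\<forall>j\<in>Aset L Th mu. \<bar>muhat r ?h j - mu j th\<bar> \<le> sqrt (3 * ln (real (Suc m)) / real (npulls ?h j))"
    using assms(4) fp_round_if_no_deviation(1)[OF assms(1-3)] unfolding episode_set_def by force
  have "\<bar>muhat r ?h ?a - mu ?a th\<bar> \<le> ?s" using th(3) a by blast
  moreover have "\<bar>muhat r ?h ?a - mu ?a tho\<bar> \<le> ?s"
    using muhat_close_if_no_deviation[OF assms(1,3) a] .
  ultimately have "\<bar>mu ?a th - mu ?a tho\<bar> \<le> 2 * ?s" by linarith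
  with th show thesis using that by blast
qed

lemma npulls_astar_ge_if_no_deviation:
  assumes "finite Th" "tho \<in> Th" "1 \<le> p" "\<forall>k\<in>{p..m}. \<not> fp_deviation L Th mu tho r k"
  shows "m + 1 - p \<le> npulls (fp_hist L Th mu r m) (astar L mu tho)"
proof -
  let ?f = "\<lambda>k. if astar L mu tho \<in> fp_round L Th mu r k then 1 else 0 :: nat"
  have "?f k = 1" if k: "k \<in> {p..m}" for k
  proof -
    obtain k' where "k = Suc k'" using k assms(3) by (cases k) auto
    then show ?thesis using fp_round_if_no_deviation(2)[OF assms(1,2)] assms(4) k by auto
  qed
  then have "card {p..m} = (\<Sum>k\<in>{p..m}. ?f k)" by simp
  also have "\<dots> \<le> (\<Sum>k\<le>m. ?f k)" by (rule sum_mono2) auto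
  finally show ?thesis using npulls_fp_hist[OF assms(1)] by simp
qed

text \<open>Consistency in the episodes k/2..k forces at least k/2 pulls of the best arm, which shrinks
  its confidence radius to sqrt (6 ln k / k).\<close>
lemma gap_sq_le_if_pulled:
  assumes "finite Th" "tho \<in> Th" "0 < D"
    and gap: "\<And>th. th \<in> Th \<Longrightarrow> astar L mu th = i \<Longrightarrow>
                D \<le> \<bar>mu (astar L mu tho) th - mu (astar L mu tho) tho\<bar>"
    and "2 \<le> k" "i \<in> fp_round L Th mu r k"
    and good: "\<forall>k'\<in>{k div 2..k}. \<not> fp_deviation L Th mu tho r k'"
  shows "D\<^sup>2 \<le> 24 * ln (real k) / real k"
proof -
  obtain m where m: "k = Suc m" using \<open>2 \<le> k\<close> by (cases k) auto
  let ?n = "npulls (fp_hist L Th mu r m) (astar L mu tho)"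
  have "m + 1 - k div 2 \<le> ?n"
    by (rule npulls_astar_ge_if_no_deviation[OF assms(1,2)]) (use good m \<open>2 \<le> k\<close> in auto)
  then have n: "real k / 2 \<le> real ?n" using m by linarith
  have no_dev: "\<not> fp_deviation L Th mu tho r (Suc m)" using good m by auto
  have pulled: "i \<in> fp_round L Th mu r (Suc m)" using assms(6) m by simp
  obtain th where th: "th \<in> Th" "astar L mu th = i"
     "\<bar>mu (astar L mu tho) th - mu (astar L mu tho) tho\<bar> \<le> 2 * sqrt (3 * ln (real (Suc m)) / real ?n)"
    by (rule fp_round_consistent_gap[OF assms(1,2) no_dev pulled])
  have D: "D \<le> 2 * sqrt (3 * ln (real k) / real ?n)"
    using gap[OF th(1,2)] th(3) unfolding m by linarith
  have ln: "0 \<le> ln (real k)" and n_pos: "0 < real ?n" using n \<open>2 \<le> k\<close> by auto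
  have "D\<^sup>2 \<le> (2 * sqrt (3 * ln (real k) / real ?n))\<^sup>2"
    using D \<open>0 < D\<close> by (intro power_mono) auto
  also have "\<dots> = 12 * ln (real k) / real ?n"
    using ln n_pos by (simp add: power_mult_distrib)
  also have "\<dots> \<le> 12 * ln (real k) / (real k / 2)"
    using ln n \<open>2 \<le> k\<close> by (intro divide_left_mono) auto
  also have "\<dots> = 24 * ln (real k) / real k" by simp
  finally show ?thesis .
qed

lemma fp_count_le_deviations:
  assumes "finite Th" "tho \<in> Th" "0 < D"
    and gap: "\<And>th. th \<in> Th \<Longrightarrow> astar L mu th = i \<Longrightarrow>
                D \<le> \<bar>mu (astar L mu tho) th - mu (astar L mu tho) tho\<bar>"
    and K0: "2 \<le> K0" "\<And>k. K0 \<le> k \<Longrightarrow> 24 * ln (real k) / real k < D\<^sup>2"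
  shows "real (fp_count L Th mu r T i) \<le> real K0 +
     (\<Sum>k\<in>{K0..T}. \<Sum>k'\<in>{k div 2..k}. if fp_deviation L Th mu tho r k' then 1 else 0)"
proof -
  define f where "f k = (if i \<in> fp_round L Th mu r k then 1 else 0 :: real)" for k
  let ?dev = "\<lambda>k. \<Sum>k'\<in>{k div 2..k}. if fp_deviation L Th mu tho r k' then 1 else 0 :: real"
  have late: "f k \<le> ?dev k" if k: "k \<in> {K0..T}" for k
  proof (cases "i \<in> fp_round L Th mu r k")
    case True
    have "\<not> D\<^sup>2 \<le> 24 * ln (real k) / real k" and "2 \<le> k" using K0(1) K0(2)[of k] k by (simp_all add: not_le)
    then obtain k' where k': "k' \<in> {k div 2..k}" "fp_deviation L Th mu tho r k'"
      using gap_sq_le_if_pulled[OF assms(1-3) gap _ True] by blast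
    have "1 \<le> ?dev k"
      using member_le_sum[OF k'(1), where f="\<lambda>k'. if fp_deviation L Th mu tho r k' then 1 else 0 :: real"]
        k'(2) by simp
    then show ?thesis by (simp add: f_def)
  qed (simp add: f_def sum_nonneg)
  have "real (fp_count L Th mu r T i) \<le> real (npulls (fp_hist L Th mu r T) i)"
    unfolding fp_count_def npulls_def by (simp add: count_list_take_le)
  also have "\<dots> = (\<Sum>k\<le>T. f k)"
    by (auto simp: npulls_fp_hist[OF assms(1)] f_def of_nat_sum intro!: sum.cong)
  also have "\<dots> \<le> (\<Sum>k\<in>{..<K0} \<union> {K0..T}. f k)" by (intro sum_mono2) (auto simp: f_def)
  also have "\<dots> = (\<Sum>k<K0. f k) + (\<Sum>k\<in>{K0..T}. f k)" by (intro sum.union_disjoint) auto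
  also have "\<dots> \<le> real K0 + (\<Sum>k\<in>{K0..T}. ?dev k)"
  proof (rule add_mono)
    show "(\<Sum>k<K0. f k) \<le> real K0" using sum_mono[of "{..<K0}" f "\<lambda>_. 1"] by (simp add: f_def)
    show "(\<Sum>k\<in>{K0..T}. f k) \<le> (\<Sum>k\<in>{K0..T}. ?dev k)" by (intro sum_mono late)
  qed
  finally show ?thesis .
qed

lemma (in prob_space) prob_sample_mean_deviation_le:
  fixes Y :: "'i \<Rightarrow> 'a \<Rightarrow> real" and Q :: "real measure"
  assumes indep: "indep_vars (\<lambda>_. borel) Y I" and "finite I" "I \<noteq> {}"
    and distr: "\<And>i. i \<in> I \<Longrightarrow> distr M borel (Y i) = Q"
    and Q: "prob_space Q" "sets Q = sets borel" "emeasure Q {0..1} = 1" "(\<integral>x. x \<partial>Q) = m"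
    and "0 \<le> eps"
  shows "prob {w\<in>space M. eps \<le> \<bar>(\<Sum>i\<in>I. Y i w) / real (card I) - m\<bar>}
           \<le> 2 * exp (- 2 * real (card I) * eps\<^sup>2)"
proof -
  interpret Q: prob_space Q by fact
  obtain i0 where i0: "i0 \<in> I" using \<open>I \<noteq> {}\<close> by blast
  have rv: "random_variable borel (Y i0)" using indep i0 unfolding indep_vars_def by blast
  have "AE x in Q. x \<in> {0..1}"
    using Q(2,3) by (intro Q.AE_prob_1) (simp add: Q.emeasure_eq_measure)
  then have "AE x in distr M borel (Y i0). x \<in> {0..1}" unfolding distr[OF i0] .
  then have bounded: "AE x in M. Y i0 x \<in> {0..1}" using rv by (subst (asm) AE_distr_iff) auto
  interpret H: Hoeffding_ineq_iid M I Y "Y i0" 0 1 "expectation (Y i0)"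
    by unfold_locales (use assms i0 rv bounded in auto)
  have "expectation (Y i0) = m"
    using integral_distr[OF rv, of "\<lambda>x. x", symmetric] distr[OF i0] Q(4) by simp
  then show ?thesis using H.Hoeffding_ineq_abs_ge'[OF \<open>0 \<le> eps\<close> _ \<open>I \<noteq> {}\<close>] by simp
qed

lemma (in prob_space) prob_arm_mean_deviation_le:
  fixes X :: "'j \<Rightarrow> nat \<Rightarrow> 'a \<Rightarrow> real" and Q :: "real measure"
  assumes indep: "indep_vars (\<lambda>_. borel) (\<lambda>(j, tau). X j tau) (J \<times> {1..})" and "j \<in> J"
    and distr: "\<And>tau. 1 \<le> tau \<Longrightarrow> distr M borel (X j tau) = Q"
    and Q: "prob_space Q" "sets Q = sets borel" "emeasure Q {0..1} = 1" "(\<integral>x. x \<partial>Q) = m"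
    and "1 \<le> n" "1 \<le> k"
  shows "prob {w\<in>space M. sqrt (3 * ln (real k) / real n) < \<bar>(\<Sum>tau = 1..n. X j tau w) / real n - m\<bar>}
           \<le> 2 / real k ^ 6"
proof -
  let ?I = "Pair j ` {1..n}"
  define rad where "rad = sqrt (3 * ln (real k) / real n)"
  define dev where "dev w = \<bar>(\<Sum>tau = 1..n. X j tau w) / real n - m\<bar>" for w
  have "X j tau \<in> borel_measurable M" if "1 \<le> tau" for tau
    using indep \<open>j \<in> J\<close> that unfolding indep_vars_def by force
  then have "(\<lambda>w. \<Sum>tau = 1..n. X j tau w) \<in> borel_measurable M" by auto
  then have "{w\<in>space M. rad \<le> dev w} \<in> events" unfolding dev_def by measurable
  then have "prob {w\<in>space M. rad < dev w} \<le> prob {w\<in>space M. rad \<le> dev w}"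
    by (intro finite_measure_mono) auto
  also have "\<dots> \<le> 2 * exp (- 2 * real n * rad\<^sup>2)"
  proof -
    have card: "card ?I = n" by (simp add: card_image inj_on_def)
    have sum: "(\<Sum>x\<in>?I. case_prod X x w) = (\<Sum>tau = 1..n. X j tau w)" for w
      by (simp add: sum.reindex inj_on_def)
    have "indep_vars (\<lambda>_. borel) (case_prod X) ?I"
      by (rule indep_vars_subset[OF indep]) (use \<open>j \<in> J\<close> in auto)
    then have "prob {w\<in>space M. rad \<le> \<bar>(\<Sum>x\<in>?I. case_prod X x w) / real (card ?I) - m\<bar>}
        \<le> 2 * exp (- 2 * real (card ?I) * rad\<^sup>2)"
      by (rule prob_sample_mean_deviation_le[where Q=Q])
        (use Q distr \<open>1 \<le> n\<close> \<open>1 \<le> k\<close> in \<open>auto simp: rad_def\<close>)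
    then show ?thesis unfolding card sum dev_def .
  qed
  also have "- 2 * real n * rad\<^sup>2 = - (real 6 * ln (real k))"
    using \<open>1 \<le> n\<close> \<open>1 \<le> k\<close> by (simp add: rad_def field_simps)
  also have "exp (- (real 6 * ln (real k))) = 1 / real k ^ 6"
    using \<open>1 \<le> k\<close> by (simp add: exp_minus exp_of_nat_mult inverse_eq_divide del: of_nat_numeral)
  finally show ?thesis unfolding rad_def dev_def by simp
qed

lemma (in prob_space) fp_deviation_prob_le:
  fixes X :: "nat \<Rightarrow> nat \<Rightarrow> 'a \<Rightarrow> real" and P :: "nat \<Rightarrow> real measure"
  assumes A: "Aset L Th mu \<subseteq> arms L" "finite Th"
    and P: "\<forall>j\<in>arms L. prob_space (P j) \<and> sets (P j) = sets borel
              \<and> emeasure (P j) {0..1} = 1 \<and> (\<integral>x. x \<partial>P j) = mu j tho"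
    and indep: "indep_vars (\<lambda>_. borel) (\<lambda>(j, tau). X j tau) (arms L \<times> {1..})"
    and distr: "\<forall>j\<in>arms L. \<forall>tau\<ge>1. distr M borel (X j tau) = P j"
    and "1 \<le> k"
  shows "{w\<in>space M. fp_deviation L Th mu tho (\<lambda>j tau. X j tau w) k} \<in> events"
    and "prob {w\<in>space M. fp_deviation L Th mu tho (\<lambda>j tau. X j tau w) k}
           \<le> 2 * real (card (Aset L Th mu)) / real k ^ 5"
proof -
  let ?A = "Aset L Th mu"
  define E where "E j n = {w\<in>space M.
    sqrt (3 * ln (real k) / real n) < \<bar>(\<Sum>tau = 1..n. X j tau w) / real n - mu j tho\<bar>}" for j n
  have "finite ?A" using A(2) by (simp add: Aset_def)
  have E: "E j n \<in> events" if "j \<in> ?A" for j n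
  proof -
    have "X j tau \<in> borel_measurable M" if "1 \<le> tau" for tau
      using indep \<open>j \<in> ?A\<close> A(1) that unfolding indep_vars_def by force
    then have "(\<lambda>w. \<Sum>tau = 1..n. X j tau w) \<in> borel_measurable M" by auto
    then show ?thesis unfolding E_def by measurable
  qed
  have union: "{w\<in>space M. fp_deviation L Th mu tho (\<lambda>j tau. X j tau w) k} = (\<Union>j\<in>?A. \<Union>n\<in>{1..k}. E j n)"
    unfolding fp_deviation_def E_def by auto
  show "{w\<in>space M. fp_deviation L Th mu tho (\<lambda>j tau. X j tau w) k} \<in> events"
    unfolding union using \<open>finite ?A\<close> E by auto
  have E_prob: "prob (E j n) \<le> 2 / real k ^ 6" if "j \<in> ?A" "n \<in> {1..k}" for j n
    unfolding E_def using that A(1) P distr \<open>1 \<le> k\<close>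
    by (intro prob_arm_mean_deviation_le[OF indep, where Q="P j"]) auto
  have "prob (\<Union>j\<in>?A. \<Union>n\<in>{1..k}. E j n) \<le> (\<Sum>j\<in>?A. prob (\<Union>n\<in>{1..k}. E j n))"
    using \<open>finite ?A\<close> E by (intro finite_measure_subadditive_finite) auto
  also have "\<dots> \<le> (\<Sum>j\<in>?A. \<Sum>n\<in>{1..k}. prob (E j n))"
    using E by (intro sum_mono finite_measure_subadditive_finite) auto
  also have "\<dots> \<le> (\<Sum>j\<in>?A. \<Sum>n\<in>{1..k}. 2 / real k ^ 6)"
    using E_prob by (intro sum_mono) auto
  also have "\<dots> = 2 * real (card ?A) / real k ^ 5"
    using \<open>1 \<le> k\<close> by (simp add: field_simps power_eq_if)
  finally show "prob {w\<in>space M. fp_deviation L Th mu tho (\<lambda>j tau. X j tau w) k}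
      \<le> 2 * real (card ?A) / real k ^ 5"
    unfolding union .
qed

lemma window_sum_inverse_pow5_le:
  assumes "2 \<le> k" "0 \<le> c"
  shows "(\<Sum>k'\<in>{k div 2..k}. c / real k' ^ 5) \<le> 2048 * c / real k ^ 2"
proof -
  have summand: "c / real k' ^ 5 \<le> 1024 * c / real k ^ 5" if "k' \<in> {k div 2..k}" for k'
  proof -
    have "real k \<le> 4 * real k'" using assms(1) that by auto
    then have k: "real k ^ 5 \<le> 1024 * real k' ^ 5"
      using power_mono[of "real k" "4 * real k'" 5] by (simp add: power_mult_distrib)
    have "0 < real k'" using assms(1) that by auto
    then have "c / real k' ^ 5 = 1024 * c / (1024 * real k' ^ 5)" by simp
    also have "\<dots> \<le> 1024 * c / real k ^ 5"
      using k assms \<open>0 < real k'\<close> by (intro divide_left_mono) auto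
    finally show ?thesis .
  qed
  have "(\<Sum>k'\<in>{k div 2..k}. c / real k' ^ 5) \<le> (\<Sum>k'\<in>{k div 2..k}. 1024 * c / real k ^ 5)"
    by (rule sum_mono) (rule summand)
  also have "\<dots> = real (Suc k - k div 2) * (1024 * c / real k ^ 5)" by simp
  also have "\<dots> \<le> 2 * real k * (1024 * c / real k ^ 5)"
    using assms by (intro mult_right_mono) auto
  also have "\<dots> = 2048 * c / real k ^ 4" using assms by (simp add: field_simps power_eq_if)
  also have "\<dots> \<le> 2048 * c / real k ^ 2"
    using assms by (intro divide_left_mono power_increasing) auto
  finally show ?thesis .
qed

lemma (in prob_space) expectation_le_sum_expectation:
  fixes f :: "'a \<Rightarrow> real"
  assumes "finite I" "0 \<le> c" "\<And>k. k \<in> I \<Longrightarrow> integrable M (g k)"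
    and "\<And>k w. k \<in> I \<Longrightarrow> w \<in> space M \<Longrightarrow> 0 \<le> g k w"
    and "\<And>w. w \<in> space M \<Longrightarrow> f w \<le> c + (\<Sum>k\<in>I. g k w)"
  shows "expectation f \<le> c + (\<Sum>k\<in>I. expectation (g k))"
proof -
  have "expectation f \<le> expectation (\<lambda>w. c + (\<Sum>k\<in>I. g k w))"
    using assms by (intro integral_mono') (auto intro!: sum_nonneg add_nonneg_nonneg)
  also have "\<dots> = c + (\<Sum>k\<in>I. expectation (g k))"
    using assms(3) by (simp add: Bochner_Integration.integral_add Bochner_Integration.integral_sum prob_space)
  finally show ?thesis .
qed

lemma (in prob_space) expected_fp_count_le:
  fixes X :: "nat \<Rightarrow> nat \<Rightarrow> 'a \<Rightarrow> real" and P :: "nat \<Rightarrow> real measure"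
  assumes Th: "finite Th" "tho \<in> Th" "Aset L Th mu \<subseteq> arms L"
    and D: "0 < D" "\<And>th. th \<in> Th \<Longrightarrow> astar L mu th = i \<Longrightarrow>
                D \<le> \<bar>mu (astar L mu tho) th - mu (astar L mu tho) tho\<bar>"
    and K0: "2 \<le> K0" "\<And>k. K0 \<le> k \<Longrightarrow> 24 * ln (real k) / real k < D\<^sup>2"
    and P: "\<forall>j\<in>arms L. prob_space (P j) \<and> sets (P j) = sets borel
              \<and> emeasure (P j) {0..1} = 1 \<and> (\<integral>x. x \<partial>P j) = mu j tho"
    and indep: "indep_vars (\<lambda>_. borel) (\<lambda>(j, tau). X j tau) (arms L \<times> {1..})"
    and distr: "\<forall>j\<in>arms L. \<forall>tau\<ge>1. distr M borel (X j tau) = P j"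
  shows "expectation (\<lambda>w. real (fp_count L Th mu (\<lambda>j tau. X j tau w) T i))
           \<le> real K0 + 4096 * real (card (Aset L Th mu)) * (\<Sum>k. inverse (real k ^ 2))"
proof -
  let ?c = "2 * real (card (Aset L Th mu))"
  define E where "E k = {w\<in>space M. fp_deviation L Th mu tho (\<lambda>j tau. X j tau w) k}" for k
  have window: "1 \<le> k'" if "k \<in> {K0..T}" "k' \<in> {k div 2..k}" for k k'
    using K0(1) that by auto
  have E: "E k' \<in> events" "prob (E k') \<le> ?c / real k' ^ 5" if "1 \<le> k'" for k'
    using fp_deviation_prob_le[OF Th(3,1) P indep distr that] unfolding E_def by auto
  have E_integrable: "integrable M (indicator (E k') :: 'a \<Rightarrow> real)" if "1 \<le> k'" for k'
    using E(1)[OF that] by (intro integrable_real_indicator) (auto simp: emeasure_eq_measure)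
  have "expectation (\<lambda>w. real (fp_count L Th mu (\<lambda>j tau. X j tau w) T i))
      \<le> real K0 + (\<Sum>k\<in>{K0..T}. expectation (\<lambda>w. \<Sum>k'\<in>{k div 2..k}. indicator (E k') w))"
  proof (rule expectation_le_sum_expectation)
    fix w assume "w \<in> space M"
    then have "indicator (E k') w = (if fp_deviation L Th mu tho (\<lambda>j tau. X j tau w) k' then 1 else 0 :: real)"
      for k' by (simp add: E_def)
    then show "real (fp_count L Th mu (\<lambda>j tau. X j tau w) T i)
        \<le> real K0 + (\<Sum>k\<in>{K0..T}. \<Sum>k'\<in>{k div 2..k}. indicator (E k') w)"
      by (simp only:) (rule fp_count_le_deviations[where L=L and mu=mu and i=i, OF Th(1,2) D K0])
  qed (use E_integrable window in \<open>auto intro!: Bochner_Integration.integrable_sum sum_nonneg\<close>)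
  also have "\<dots> = real K0 + (\<Sum>k\<in>{K0..T}. \<Sum>k'\<in>{k div 2..k}. prob (E k'))"
    using E_integrable window by (simp add: Bochner_Integration.integral_sum E_def Int_absorb2)
  also have "\<dots> \<le> real K0 + (\<Sum>k\<in>{K0..T}. 2048 * ?c * inverse (real k ^ 2))"
  proof (intro add_left_mono sum_mono)
    fix k assume k: "k \<in> {K0..T}"
    have "(\<Sum>k'\<in>{k div 2..k}. prob (E k')) \<le> (\<Sum>k'\<in>{k div 2..k}. ?c / real k' ^ 5)"
      using E window[OF k] by (intro sum_mono) auto
    also have "\<dots> \<le> 2048 * ?c / real k ^ 2"
      using K0(1) k by (intro window_sum_inverse_pow5_le) auto
    finally show "(\<Sum>k'\<in>{k div 2..k}. prob (E k')) \<le> 2048 * ?c * inverse (real k ^ 2)"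
      by (simp add: divide_inverse)
  qed
  also have "\<dots> \<le> real K0 + 2048 * ?c * (\<Sum>k. inverse (real k ^ 2))"
    unfolding sum_distrib_left[symmetric]
    by (intro add_left_mono mult_left_mono sum_le_suminf inverse_power_summable) auto
  finally show ?thesis by simp
qed

lemma gap_if_not_in_Cset:
  assumes "finite Th" "i \<in> Aset L Th mu - Cset L Th mu tho" "i \<noteq> astar L mu tho"
  obtains D where "0 < D" "\<And>th. th \<in> Th \<Longrightarrow> astar L mu th = i \<Longrightarrow>
                D \<le> \<bar>mu (astar L mu tho) th - mu (astar L mu tho) tho\<bar>"
proof -
  let ?a = "astar L mu tho"
  define S where "S = (\<lambda>th. \<bar>mu ?a th - mu ?a tho\<bar>) ` {th \<in> Th. astar L mu th = i}"
  have "finite S" using assms(1) unfolding S_def by auto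
  have S_pos: "0 < x" if "x \<in> S" for x
  proof -
    obtain th where th: "th \<in> Th" "astar L mu th = i" "x = \<bar>mu ?a th - mu ?a tho\<bar>"
      using \<open>x \<in> S\<close> unfolding S_def by auto
    have "th \<notin> Bset L Th mu tho" using assms(2) th(2) unfolding Cset_def by auto
    then show ?thesis using th assms(3) unfolding Bset_def by auto
  qed
  show thesis
  proof (rule that[of "Min (insert 1 S)"])
    show "0 < Min (insert 1 S)" using \<open>finite S\<close> S_pos by auto
    show "Min (insert 1 S) \<le> \<bar>mu ?a th - mu ?a tho\<bar>" if "th \<in> Th" "astar L mu th = i" for th
      using \<open>finite S\<close> that by (intro Min_le) (auto simp: S_def)
  qed
qed

lemma ln_over_eventually_less:
  assumes "0 < e"
  obtains K0 :: nat where "2 \<le> K0" "\<And>k. K0 \<le> k \<Longrightarrow> 24 * ln (real k) / real k < e"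
proof -
  have "(\<lambda>k::nat. 24 * ln (real k) / real k) \<longlonglongrightarrow> 0" by real_asymp
  from order_tendstoD(2)[OF this assms] obtain N where "\<forall>k\<ge>N. 24 * ln (real k) / real k < e"
    unfolding eventually_sequentially by blast
  then show thesis using that[of "max N 2"] by auto
qed

theorem proposition1:
  fixes L :: nat and Th :: "'p set" and mu :: "nat \<Rightarrow> 'p \<Rightarrow> real"
    and tho :: 'p and i :: nat
  assumes finTh: "finite Th"
    and tho: "tho \<in> Th"
    and assumption1: "\<forall>th\<in>Th. \<exists>a\<in>arms L. \<forall>j\<in>arms L. j \<noteq> a \<longrightarrow> mu j th < mu a th"
    and i_in: "i \<in> Aset L Th mu - Cset L Th mu tho"
    and i_ne: "i \<noteq> astar L mu tho"
  shows "\<exists>C::real. \<forall>(M::'w measure) (P :: nat \<Rightarrow> 'p \<Rightarrow> real measure)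
            (X :: nat \<Rightarrow> nat \<Rightarrow> 'w \<Rightarrow> real) (T::nat).
      prob_space M
      \<and> (\<forall>j\<in>arms L. \<forall>th\<in>Th. prob_space (P j th) \<and> sets (P j th) = sets borel
            \<and> emeasure (P j th) {0..1} = 1 \<and> (\<integral>x. x \<partial>(P j th)) = mu j th)
      \<and> prob_space.indep_vars M (\<lambda>_. borel) (\<lambda>(j, tau). X j tau) (arms L \<times> {1..})
      \<and> (\<forall>j\<in>arms L. \<forall>tau\<ge>1. distr M borel (X j tau) = P j tho)
      \<longrightarrow> (\<integral>w. real (fp_count L Th mu (\<lambda>j tau. X j tau w) T i) \<partial>M) \<le> C"
proof -
  obtain D where D: "0 < D" "\<And>th. th \<in> Th \<Longrightarrow> astar L mu th = i \<Longrightarrow>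
                D \<le> \<bar>mu (astar L mu tho) th - mu (astar L mu tho) tho\<bar>"
    using gap_if_not_in_Cset[OF finTh i_in i_ne] by blast
  obtain K0 where K0: "2 \<le> K0" "\<And>k. K0 \<le> k \<Longrightarrow> 24 * ln (real k) / real k < D\<^sup>2"
    using ln_over_eventually_less[of "D\<^sup>2"] D(1) by auto
  have A: "Aset L Th mu \<subseteq> arms L" using Aset_subset_arms[OF assumption1] .
  show ?thesis
  proof (intro exI allI impI, elim conjE)
    fix M :: "'w measure" and P :: "nat \<Rightarrow> 'p \<Rightarrow> real measure" and X :: "nat \<Rightarrow> nat \<Rightarrow> 'w \<Rightarrow> real" and T
    assume "prob_space M" and "\<forall>j\<in>arms L. \<forall>th\<in>Th. prob_space (P j th) \<and> sets (P j th) = sets borel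
            \<and> emeasure (P j th) {0..1} = 1 \<and> (\<integral>x. x \<partial>(P j th)) = mu j th"
      and "prob_space.indep_vars M (\<lambda>_. borel) (\<lambda>(j, tau). X j tau) (arms L \<times> {1..})"
      and "\<forall>j\<in>arms L. \<forall>tau\<ge>1. distr M borel (X j tau) = P j tho"
    then show "(\<integral>w. real (fp_count L Th mu (\<lambda>j tau. X j tau w) T i) \<partial>M)
        \<le> real K0 + 4096 * real (card (Aset L Th mu)) * (\<Sum>k. inverse (real k ^ 2))"
      using prob_space.expected_fp_count_le[OF _ finTh tho A D K0, where P="\<lambda>j. P j tho"] tho
      by blast
  qed
qed

end
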